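(* Let $R_1,\dots,R_k$ be norms on $\mathbb{R}^p$, $\theta_1^*,\dots,\theta_k^*\in\mathbb{R}^p$, and $\mathcal{C}_i=\operatorname{cone}\{\Delta\in\mathbb{R}^p: R_i(\theta_i^*+\Delta)\le R_i(\theta_i^* )\}$. For $i=1,\dots,k$ define $$\delta_i=\sup\Big\{\langle u,v\rangle:\ u\in(-\mathcal{C}_i)\cap S^{p-1},\ v\in\Big(\sum_{j\ne i}\mathcal{C}_j\Big)\cap S^{p-1}\Big\},$$ and $\delta=\max_i\delta_i$. If $\delta<1$, then there exists $\rho>0$ such that for all $\Delta_i\in\mathcal{C}_i$, $i=1,\dots,k$, $$\Big\|\sum_{i=1}^k\Delta_i\Big\|_2\ \ge\ \rho\sum_{i=1}^k\|\Delta_i\|_2 .$$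
   Context: $\operatorname{cone}(E)$ is the smallest closed cone containing $E$; $S^{p-1}$ is the Euclidean unit sphere in $\mathbb{R}^p$; $\sum_{j\ne i}\mathcal{C}_j$ is the Minkowski sum of the cones. *)

theory Defs
  imports "HOL-Analysis.Analysis"
begin

definition is_norm :: "('a::real_vector \<Rightarrow> real) \<Rightarrow> bool" where
  "is_norm R \<longleftrightarrow>
     (\<forall>x. 0 \<le> R x) \<and> (\<forall>x. R x = 0 \<longleftrightarrow> x = 0) \<and>
     (\<forall>c x. R (c *\<^sub>R x) = \<bar>c\<bar> * R x) \<and>
     (\<forall>x y. R (x + y) \<le> R x + R y)"

definition closed_cone_hull :: "'a::real_normed_vector set \<Rightarrow> 'a set" where
  "closed_cone_hull E = \<Inter>{C. cone C \<and> closed C \<and> E \<subseteq> C}"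

definition descent_cone :: "('a::real_normed_vector \<Rightarrow> real) \<Rightarrow> 'a \<Rightarrow> 'a set" where
  "descent_cone R \<theta> = closed_cone_hull {\<Delta>. R (\<theta> + \<Delta>) \<le> R \<theta>}"

definition minkowski_sum :: "nat set \<Rightarrow> (nat \<Rightarrow> 'a::real_vector set) \<Rightarrow> 'a set" where
  "minkowski_sum J C = {\<Sum>j\<in>J. d j | d. \<forall>j\<in>J. d j \<in> C j}"

text \<open>delta_i, taken as a supremum in the extended reals (sup of the empty set is -infinity).\<close>
definition delta_i :: "nat \<Rightarrow> (nat \<Rightarrow> 'a::euclidean_space set) \<Rightarrow> nat \<Rightarrow> ereal" where
  "delta_i k C i = Sup {ereal (u \<bullet> v) | u v.
      u \<in> uminus ` (C i) \<inter> sphere 0 1 \<and>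
      v \<in> minkowski_sum ({..<k} - {i}) C \<inter> sphere 0 1}"

definition delta :: "nat \<Rightarrow> (nat \<Rightarrow> 'a::euclidean_space set) \<Rightarrow> ereal" where
  "delta k C = Max (delta_i k C ` {..<k})"

end

theory Submission
  imports Defs
begin

text \<open>Split \<open>\<Sum>\<^sub>j \<Delta>\<^sub>j = \<Delta>\<^sub>i + w\<close> with \<open>w\<close> in the Minkowski sum of the other cones. After
  normalisation, \<open>-\<Delta>\<^sub>i\<close> and \<open>w\<close> are admissible in the supremum defining \<open>\<delta>\<^sub>i\<close>, so
  \<open>-\<langle>\<Delta>\<^sub>i, w\<rangle> \<le> \<delta> \<parallel>\<Delta>\<^sub>i\<parallel> \<parallel>w\<parallel>\<close>, and expanding \<open>\<parallel>\<Delta>\<^sub>i + w\<parallel>\<^sup>2\<close> gives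
  \<open>\<parallel>\<Sum>\<^sub>j \<Delta>\<^sub>j\<parallel> \<ge> \<surd>(1 - \<delta>) \<parallel>\<Delta>\<^sub>i\<parallel>\<close>. Averaging over \<open>i\<close> yields \<open>\<rho> = \<surd>(1 - \<delta>) / k\<close>.\<close>

lemma cone_closed_cone_hull: "cone (closed_cone_hull E)"
  unfolding closed_cone_hull_def cone_def by blast

lemma cone_descent_cone: "cone (descent_cone R \<theta>)"
  unfolding descent_cone_def by (rule cone_closed_cone_hull)

lemma sum_mem_minkowski_sum:
  "(\<And>j. j \<in> J \<Longrightarrow> d j \<in> C j) \<Longrightarrow> (\<Sum>j\<in>J. d j) \<in> minkowski_sum J C"
  unfolding minkowski_sum_def by blast

lemma cone_minkowski_sum:
  assumes "\<And>j. j \<in> J \<Longrightarrow> cone (C j)"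
  shows "cone (minkowski_sum J C)"
  unfolding cone_def
proof (intro ballI allI impI)
  fix x and c :: real
  assume "x \<in> minkowski_sum J C" "0 \<le> c"
  then obtain d where d: "\<forall>j\<in>J. d j \<in> C j" and x: "x = (\<Sum>j\<in>J. d j)"
    unfolding minkowski_sum_def by blast
  have "c *\<^sub>R x = (\<Sum>j\<in>J. c *\<^sub>R d j)"
    by (simp add: x scaleR_sum_right)
  also have "\<dots> \<in> minkowski_sum J C"
    using assms d \<open>0 \<le> c\<close> by (intro sum_mem_minkowski_sum) (auto simp: cone_def)
  finally show "c *\<^sub>R x \<in> minkowski_sum J C" .
qed

lemma delta_i_le_delta: "i < k \<Longrightarrow> delta_i k C i \<le> delta k C"
  unfolding delta_def by (intro Max_ge) auto

lemma neg_inner_le_delta_i: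
  assumes "cone (C i)" "cone (minkowski_sum ({..<k} - {i}) C)"
    and x: "x \<in> C i" and w: "w \<in> minkowski_sum ({..<k} - {i}) C"
    and "0 \<le> d" and "delta_i k C i \<le> ereal d"
  shows "- (x \<bullet> w) \<le> d * norm x * norm w"
proof (cases "x = 0 \<or> w = 0")
  case True
  then show ?thesis using \<open>0 \<le> d\<close> by auto
next
  case False
  define u where "u = - ((1 / norm x) *\<^sub>R x)"
  define v where "v = (1 / norm w) *\<^sub>R w"
  have "u \<in> uminus ` C i \<inter> sphere 0 1"
    using False assms(1) x unfolding u_def cone_def by auto
  moreover have "v \<in> minkowski_sum ({..<k} - {i}) C \<inter> sphere 0 1"
    using False assms(2) w unfolding v_def cone_def by auto
  ultimately have "ereal (u \<bullet> v) \<le> delta_i k C i"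
    unfolding delta_i_def by (intro Sup_upper) blast
  then have "u \<bullet> v \<le> d"
    using assms(6) by (metis order_trans ereal_less_eq(3))
  have "- (x \<bullet> w) = norm x * norm w * (u \<bullet> v)"
    unfolding u_def v_def using False by simp
  also have "\<dots> \<le> norm x * norm w * d"
    using \<open>u \<bullet> v \<le> d\<close> by (intro mult_left_mono) auto
  finally show ?thesis
    by (simp add: mult_ac)
qed

lemma norm_add_ge_if_neg_inner_le:
  fixes x w :: "'a::real_inner"
  assumes "0 \<le> d" "d < 1" and "- (x \<bullet> w) \<le> d * norm x * norm w"
  shows "sqrt (1 - d) * norm x \<le> norm (x + w)"
proof -
  have "(1 - d) * (norm x)\<^sup>2 \<le> (1 - d) * (norm x)\<^sup>2 + d * (norm x - norm w)\<^sup>2 + (1 - d) * (norm w)\<^sup>2"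
    using assms(1,2) by simp
  also have "\<dots> = (norm x)\<^sup>2 + (norm w)\<^sup>2 - 2 * d * norm x * norm w"
    by (simp add: power2_eq_square algebra_simps)
  also have "\<dots> \<le> (norm x)\<^sup>2 + (norm w)\<^sup>2 + 2 * (x \<bullet> w)"
    using assms(3) by linarith
  also have "\<dots> = (norm (x + w))\<^sup>2"
    by (simp add: power2_norm_eq_inner inner_add_left inner_add_right inner_commute)
  finally have "sqrt ((1 - d) * (norm x)\<^sup>2) \<le> norm (x + w)"
    using real_sqrt_le_mono by fastforce
  then show ?thesis
    using assms(2) by (simp add: real_sqrt_mult)
qed

lemma norm_sum_ge_summand:
  fixes \<Delta> :: "nat \<Rightarrow> 'a::euclidean_space"
  assumes cones: "\<And>j. cone (C j)"
    and "0 \<le> d" "d < 1" "delta k C \<le> ereal d"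
    and \<Delta>: "\<forall>j<k. \<Delta> j \<in> C j" and "i < k"
  shows "sqrt (1 - d) * norm (\<Delta> i) \<le> norm (\<Sum>j<k. \<Delta> j)"
proof -
  define w where "w = (\<Sum>j\<in>{..<k} - {i}. \<Delta> j)"
  have split: "(\<Sum>j<k. \<Delta> j) = \<Delta> i + w"
    unfolding w_def using \<open>i < k\<close> by (simp add: sum.remove)
  have "w \<in> minkowski_sum ({..<k} - {i}) C"
    unfolding w_def using \<Delta> by (intro sum_mem_minkowski_sum) auto
  moreover have "delta_i k C i \<le> ereal d"
    using delta_i_le_delta[OF \<open>i < k\<close>] assms(4) by (rule order_trans)
  ultimately have neg_inner: "- (\<Delta> i \<bullet> w) \<le> d * norm (\<Delta> i) * norm w"
    using \<Delta> \<open>i < k\<close> \<open>0 \<le> d\<close>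
    by (intro neg_inner_le_delta_i cone_minkowski_sum) (auto simp: cones)
  show ?thesis
    unfolding split by (rule norm_add_ge_if_neg_inner_le[OF assms(2,3) neg_inner])
qed

lemma ereal_less_one_le_ereal:
  fixes x :: ereal
  assumes "x < 1"
  obtains d where "0 \<le> d" "d < 1" "x \<le> ereal d"
proof (cases x)
  case (real r)
  then show ?thesis using assms that[of "max 0 r"] by auto
qed (use assms that[of 0] in auto)

theorem theorem2:
  fixes k :: nat
    and R :: "nat \<Rightarrow> 'a::euclidean_space \<Rightarrow> real"
    and \<theta> :: "nat \<Rightarrow> 'a"
  assumes "k \<ge> 1"
    and "\<forall>i<k. is_norm (R i)"
    and "delta k (\<lambda>i. descent_cone (R i) (\<theta> i)) < 1"
  shows "\<exists>\<rho>>0. \<forall>\<Delta> :: nat \<Rightarrow> 'a.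
           (\<forall>i<k. \<Delta> i \<in> descent_cone (R i) (\<theta> i)) \<longrightarrow>
           norm (\<Sum>i<k. \<Delta> i) \<ge> \<rho> * (\<Sum>i<k. norm (\<Delta> i))"
proof -
  obtain d where d: "0 \<le> d" "d < 1" "delta k (\<lambda>i. descent_cone (R i) (\<theta> i)) \<le> ereal d"
    using ereal_less_one_le_ereal[OF assms(3)] .
  show ?thesis
  proof (intro exI[of _ "sqrt (1 - d) / real k"] conjI allI impI)
    show "sqrt (1 - d) / real k > 0" using d(2) assms(1) by simp
  next
    fix \<Delta> :: "nat \<Rightarrow> 'a"
    assume "\<forall>i<k. \<Delta> i \<in> descent_cone (R i) (\<theta> i)"
    then have "\<And>i. i < k \<Longrightarrow> sqrt (1 - d) * norm (\<Delta> i) \<le> norm (\<Sum>i<k. \<Delta> i)"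
      using d by (intro norm_sum_ge_summand[of "\<lambda>i. descent_cone (R i) (\<theta> i)"] cone_descent_cone)
    then have "(\<Sum>i<k. sqrt (1 - d) * norm (\<Delta> i)) \<le> of_nat (card {..<k}) * norm (\<Sum>i<k. \<Delta> i)"
      by (intro sum_bounded_above) simp
    then show "sqrt (1 - d) / real k * (\<Sum>i<k. norm (\<Delta> i)) \<le> norm (\<Sum>i<k. \<Delta> i)"
      using assms(1) by (simp add: field_simps sum_distrib_left)
  qed
qed

end
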